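(* Let $\epsilon>0$ and suppose $g\in\mathrm{SO}^0(2,1)$ is $\epsilon$-hyperbolic. Then for all $\delta>0$, $$B\!\left(0,\frac{\delta\epsilon}{4}\right)\cap E^{wu}(g)\subset g\,B(0,\delta).$$
   Context: $\mathbb{R}^{2,1}$ is $\mathbb{R}^3$ with $\mathbb{B}(u,v)=u_1v_1+u_2v_2-u_3v_3$; $\mathrm{SO}^0(2,1)$ is the identity component of its linear isometry group. $\rho$ is Euclidean distance and $B(x,\delta)$ the open Euclidean ball. Let $S^1=\{(\cos\phi,\sin\phi,1)\}$. An element $g\in\mathrm{SO}^0(2,1)$ is hyperbolic if it has real distinct eigenvalues; these are $\lambda<1<\lambda^{-1}$. Let $x^-(g)$ (resp. $x^+(g)$) be the eigenvector for $\lambda$ (resp. $\lambda^{-1}$) lying on $S^1$, and $x^0(g)$ the eigenvector for eigenvalue $1$ with $\mathbb{B}(x^0(g),x^0(g))=1$ such that $(x^-(g),x^+(g),x^0(g))$ is a positively oriented basis. For a unit-spacelike $v$, $x^\pm(v)$ are the two points of $S^1\cap v^\perp$ labelled so that $(x^-(v),x^+(v),v)$ is positively oriented (so $x^\pm(x^0(g))=x^\pm(g)$). $v$ is $\epsilon$-spacelike if $\rho(x^+(v),x^-(v))\ge\epsilon$; hyperbolic $g$ is $\epsilon$-hyperbolic if $x^0(g)$ is $\epsilon$-spacelike. $E^{wu}(g)$ is the linear plane spanned by $x^0(g)$ and $x^+(g)$. *)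

theory Defs
  imports "HOL-Analysis.Analysis"
begin

definition mink :: "real^3 \<Rightarrow> real^3 \<Rightarrow> real" where
  "mink u v = u$1 * v$1 + u$2 * v$2 - u$3 * v$3"

text \<open>SO^0(2,1): linear isometries of mink with determinant 1 preserving time orientation
  (identity component).\<close>
definition SO0_21 :: "(real^3^3) set" where
  "SO0_21 = {g. (\<forall>u v. mink (g *v u) (g *v v) = mink u v) \<and> det g = 1 \<and> g$3$3 > 0}"

definition S1 :: "(real^3) set" where
  "S1 = {x. x$3 = 1 \<and> (x$1)^2 + (x$2)^2 = 1}"

definition is_eigenvalue :: "real^3^3 \<Rightarrow> real \<Rightarrow> bool" where
  "is_eigenvalue g l \<longleftrightarrow> (\<exists>v. v \<noteq> 0 \<and> g *v v = l *\<^sub>R v)"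

definition hyperbolic :: "real^3^3 \<Rightarrow> bool" where
  "hyperbolic g \<longleftrightarrow> g \<in> SO0_21 \<and> (\<exists>l1 l2 l3. l1 \<noteq> l2 \<and> l1 \<noteq> l3 \<and> l2 \<noteq> l3
      \<and> is_eigenvalue g l1 \<and> is_eigenvalue g l2 \<and> is_eigenvalue g l3)"

definition pos_oriented :: "real^3 \<Rightarrow> real^3 \<Rightarrow> real^3 \<Rightarrow> bool" where
  "pos_oriented a b c \<longleftrightarrow> det (vector [a, b, c] :: real^3^3) > 0"

definition xminus :: "real^3^3 \<Rightarrow> real^3" where
  "xminus g = (THE x. x \<in> S1 \<and> (\<exists>l. l < 1 \<and> g *v x = l *\<^sub>R x))"

definition xplus :: "real^3^3 \<Rightarrow> real^3" where
  "xplus g = (THE x. x \<in> S1 \<and> (\<exists>l. l > 1 \<and> g *v x = l *\<^sub>R x))"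

definition xzero :: "real^3^3 \<Rightarrow> real^3" where
  "xzero g = (THE x. g *v x = x \<and> mink x x = 1 \<and> pos_oriented (xminus g) (xplus g) x)"

text \<open>For unit spacelike v, the two points of S1 \<inter> v^\<perp>, labelled so that
  (x^-(v), x^+(v), v) is positively oriented.\<close>
definition vminus :: "real^3 \<Rightarrow> real^3" where
  "vminus v = (THE x. x \<in> S1 \<and> mink x v = 0 \<and>
      (\<exists>y. y \<in> S1 \<and> mink y v = 0 \<and> pos_oriented x y v))"

definition vplus :: "real^3 \<Rightarrow> real^3" where
  "vplus v = (THE y. y \<in> S1 \<and> mink y v = 0 \<and> pos_oriented (vminus v) y v)"

definition eps_spacelike :: "real \<Rightarrow> real^3 \<Rightarrow> bool" where
  "eps_spacelike \<epsilon> v \<longleftrightarrow> dist (vplus v) (vminus v) \<ge> \<epsilon>"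

definition eps_hyperbolic :: "real \<Rightarrow> real^3^3 \<Rightarrow> bool" where
  "eps_hyperbolic \<epsilon> g \<longleftrightarrow> hyperbolic g \<and> eps_spacelike \<epsilon> (xzero g)"

definition Ewu :: "real^3^3 \<Rightarrow> (real^3) set" where
  "Ewu g = span {xzero g, xplus g}"

end

theory Submission
  imports Defs
begin

text \<open>
  Eigenvectors of \<open>g\<close> whose eigenvalues have product \<open>\<noteq> 1\<close> are Minkowski-orthogonal. As the form
  is nondegenerate, every eigenvalue has a reciprocal partner, and with \<open>det g = 1\<close> the spectrum is
  \<open>\<lambda> < 1 < 1/\<lambda>\<close> together with \<open>1\<close>. The \<open>\<lambda>\<^sup>\<plusminus>\<^sup>1\<close>-eigenlines are null and meet \<open>S\<^sup>1\<close> in \<open>x\<^sup>-\<close>, \<open>x\<^sup>+\<close>, and the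
  fixed line is the Minkowski normal of their plane, whence \<open>x\<^sup>\<plusminus>(x\<^sup>0(g)) = x\<^sup>\<plusminus>(g)\<close>.
  On \<open>E\<^sup>w\<^sup>u(g)\<close> the inverse of \<open>g\<close> sends \<open>y = a x\<^sup>0 + b x\<^sup>+\<close> to \<open>a x\<^sup>0 + \<lambda> b x\<^sup>+ = \<lambda> y + (1 - \<lambda>) a x\<^sup>0\<close>,
  so it suffices to bound \<open>|a x\<^sup>0|\<close> by \<open>|y|\<close>. On this plane the Euclidean norm is
  \<open>a\<^sup>2 + 2 (a x\<^sup>0\<^sub>3 + b)\<^sup>2 \<ge> a\<^sup>2\<close>, while \<open>|x\<^sup>0|\<^sup>2 = 1 + 2 (x\<^sup>0\<^sub>3)\<^sup>2\<close>; and since the chord \<open>x\<^sup>+ - x\<^sup>-\<close> has length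
  at most \<open>2 / sqrt (1 + (x\<^sup>0\<^sub>3)\<^sup>2)\<close>, \<open>\<epsilon>\<close>-spacelikeness gives \<open>|x\<^sup>0| \<le> 2 sqrt 2 / \<epsilon>\<close>.
\<close>

section \<open>Determinants of triples and eigenvectors\<close>

definition det3 :: "real^3 \<Rightarrow> real^3 \<Rightarrow> real^3 \<Rightarrow> real" where
  "det3 a b c = det (vector [a, b, c] :: real^3^3)"

lemma det3_expand:
  "det3 a b c = a$1*b$2*c$3 + a$2*b$3*c$1 + a$3*b$1*c$2 - a$1*b$3*c$2 - a$2*b$1*c$3 - a$3*b$2*c$1"
  unfolding det3_def by (simp add: det_3)

lemma pos_oriented_iff_det3: "pos_oriented a b c \<longleftrightarrow> det3 a b c > 0"
  by (simp add: pos_oriented_def det3_def)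

lemma vec3_eq_iff: "(x::real^3) = y \<longleftrightarrow> x$1 = y$1 \<and> x$2 = y$2 \<and> x$3 = y$3"
  by (simp add: vec_eq_iff forall_3)

lemma det3_cramer: "det3 a b c *\<^sub>R z = det3 z b c *\<^sub>R a + det3 a z c *\<^sub>R b + det3 a b z *\<^sub>R c"
  unfolding det3_expand by (simp add: vec_eq_iff forall_3 algebra_simps)

lemma det3_scaleR3: "det3 a b (t *\<^sub>R z) = t * det3 a b z"
  and det3_rotate: "det3 a b c = det3 c a b"
  and det3_swap12: "det3 b a c = - det3 a b c"
  and det3_repeat12: "det3 a a c = 0"
  by (simp_all add: det3_expand algebra_simps)

lemma det3_nonzero_spans:
  assumes "det3 a b c \<noteq> 0"
  obtains \<alpha> \<beta> \<gamma> where "z = \<alpha> *\<^sub>R a + \<beta> *\<^sub>R b + \<gamma> *\<^sub>R c"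
proof
  let ?D = "det3 a b c"
  have "z = (1 / ?D) *\<^sub>R (?D *\<^sub>R z)" using assms by simp
  then show "z = (det3 z b c / ?D) *\<^sub>R a + (det3 a z c / ?D) *\<^sub>R b + (det3 a b z / ?D) *\<^sub>R c"
    unfolding det3_cramer[of a b c z] by (simp add: scaleR_add_right)
qed

lemma det3_nonzero_independent:
  assumes "det3 a b c \<noteq> 0" "\<alpha> *\<^sub>R a + \<beta> *\<^sub>R b + \<gamma> *\<^sub>R c = 0"
  shows "\<alpha> = 0 \<and> \<beta> = 0 \<and> \<gamma> = 0"
proof -
  let ?z = "\<alpha> *\<^sub>R a + \<beta> *\<^sub>R b + \<gamma> *\<^sub>R c"
  have "det3 ?z b c = \<alpha> * det3 a b c" "det3 a ?z c = \<beta> * det3 a b c" "det3 a b ?z = \<gamma> * det3 a b c"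
    by (simp_all add: det3_expand algebra_simps)
  then show ?thesis using assms by (simp add: det3_expand)
qed

lemma det3_zero_dependent:
  assumes "det3 a b c = 0"
  obtains \<alpha> \<beta> \<gamma> where "\<alpha> \<noteq> 0 \<or> \<beta> \<noteq> 0 \<or> \<gamma> \<noteq> 0" "\<alpha> *\<^sub>R a + \<beta> *\<^sub>R b + \<gamma> *\<^sub>R c = 0"
proof -
  let ?M = "transpose (vector [a, b, c] :: real^3^3)"
  have "det ?M = 0" using assms by (simp add: det3_def)
  then have "\<not> (\<exists>B. B ** ?M = mat 1)"
    using invertible_det_nz invertible_left_inverse by blast
  then obtain x where x: "?M *v x = 0" "x \<noteq> 0" using matrix_left_invertible_ker by blast
  have "?M *v x = x$1 *\<^sub>R a + x$2 *\<^sub>R b + x$3 *\<^sub>R c"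
    by (simp add: vec_eq_iff forall_3 matrix_vector_mult_def transpose_def sum_3 algebra_simps)
  moreover have "x$1 \<noteq> 0 \<or> x$2 \<noteq> 0 \<or> x$3 \<noteq> 0" using x(2) by (simp add: vec3_eq_iff)
  ultimately show ?thesis using x(1) that by simp
qed

lemma eigenvector_coeff_eq_0:
  fixes g :: "real^3^3"
  assumes e: "g *v v1 = l1 *\<^sub>R v1" "g *v v2 = l2 *\<^sub>R v2" "g *v v3 = l3 *\<^sub>R v3"
    and "l1 \<noteq> l2" "l1 \<noteq> l3" "v1 \<noteq> 0"
    and s: "a *\<^sub>R v1 + b *\<^sub>R v2 + c *\<^sub>R v3 = 0"
  shows "a = 0"
proof -
  have g_comb: "g *v (x *\<^sub>R v1 + y *\<^sub>R v2 + z *\<^sub>R v3) = (x*l1) *\<^sub>R v1 + (y*l2) *\<^sub>R v2 + (z*l3) *\<^sub>R v3"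
    for x y z using e by (simp add: algebra_simps)
  have s1: "(a*l1) *\<^sub>R v1 + (b*l2) *\<^sub>R v2 + (c*l3) *\<^sub>R v3 = 0"
    using g_comb[of a b c] s by simp
  have s2: "(a*l1*l1) *\<^sub>R v1 + (b*l2*l2) *\<^sub>R v2 + (c*l3*l3) *\<^sub>R v3 = 0"
    using g_comb[of "a*l1" "b*l2" "c*l3"] s1 by simp
  \<comment> \<open>apply \<open>(g - l2)(g - l3)\<close> to the relation\<close>
  have "(a*(l1-l2)*(l1-l3)) *\<^sub>R v1 = ((a*l1*l1) *\<^sub>R v1 + (b*l2*l2) *\<^sub>R v2 + (c*l3*l3) *\<^sub>R v3)
     - (l2+l3) *\<^sub>R ((a*l1) *\<^sub>R v1 + (b*l2) *\<^sub>R v2 + (c*l3) *\<^sub>R v3) + (l2*l3) *\<^sub>R (a *\<^sub>R v1 + b *\<^sub>R v2 + c *\<^sub>R v3)"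
    by (simp add: vec3_eq_iff algebra_simps)
  also have "\<dots> = 0" using s s1 s2 by simp
  finally show ?thesis using assms(4-6) by simp
qed

lemma det3_eigenvectors_nonzero:
  fixes g :: "real^3^3"
  assumes e: "g *v v1 = l1 *\<^sub>R v1" "g *v v2 = l2 *\<^sub>R v2" "g *v v3 = l3 *\<^sub>R v3"
    and d: "l1 \<noteq> l2" "l1 \<noteq> l3" "l2 \<noteq> l3" and nz: "v1 \<noteq> 0" "v2 \<noteq> 0" "v3 \<noteq> 0"
  shows "det3 v1 v2 v3 \<noteq> 0"
proof
  assume "det3 v1 v2 v3 = 0"
  then obtain a b c where abc: "a \<noteq> 0 \<or> b \<noteq> 0 \<or> c \<noteq> 0" "a *\<^sub>R v1 + b *\<^sub>R v2 + c *\<^sub>R v3 = 0"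
    by (rule det3_zero_dependent)
  have "a = 0" using eigenvector_coeff_eq_0[OF e d(1,2) nz(1) abc(2)] .
  moreover have "b = 0" using eigenvector_coeff_eq_0[OF e(2,1,3), of b a c] d nz abc(2) by (simp add: add_ac)
  moreover have "c = 0" using eigenvector_coeff_eq_0[OF e(3,1,2), of c a b] d nz abc(2) by (simp add: add_ac)
  ultimately show False using abc(1) by simp
qed

lemma eigenvector_cases:
  fixes g :: "real^3^3"
  assumes e: "g *v v1 = l1 *\<^sub>R v1" "g *v v2 = l2 *\<^sub>R v2" "g *v v3 = l3 *\<^sub>R v3"
    and d: "l1 \<noteq> l2" "l1 \<noteq> l3" "l2 \<noteq> l3" and nz: "v1 \<noteq> 0" "v2 \<noteq> 0" "v3 \<noteq> 0"
    and z: "z \<noteq> 0" "g *v z = m *\<^sub>R z"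
  shows "(m = l1 \<and> (\<exists>c. z = c *\<^sub>R v1)) \<or> (m = l2 \<and> (\<exists>c. z = c *\<^sub>R v2))
    \<or> (m = l3 \<and> (\<exists>c. z = c *\<^sub>R v3))"
proof -
  have D: "det3 v1 v2 v3 \<noteq> 0" using det3_eigenvectors_nonzero[OF e d nz] .
  then obtain a b c where zz: "z = a *\<^sub>R v1 + b *\<^sub>R v2 + c *\<^sub>R v3" by (rule det3_nonzero_spans)
  have gz: "g *v z = (a*l1) *\<^sub>R v1 + (b*l2) *\<^sub>R v2 + (c*l3) *\<^sub>R v3"
    using e by (simp add: zz algebra_simps)
  have mz: "m *\<^sub>R z = (a*m) *\<^sub>R v1 + (b*m) *\<^sub>R v2 + (c*m) *\<^sub>R v3"
    by (simp add: zz algebra_simps)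
  have "(a*(l1-m)) *\<^sub>R v1 + (b*(l2-m)) *\<^sub>R v2 + (c*(l3-m)) *\<^sub>R v3 = g *v z - m *\<^sub>R z"
    unfolding gz mz by (simp add: algebra_simps)
  also have "\<dots> = 0" using z by simp
  finally have coeffs: "a*(l1-m) = 0" "b*(l2-m) = 0" "c*(l3-m) = 0"
    using det3_nonzero_independent[OF D] by blast+
  have "a \<noteq> 0 \<or> b \<noteq> 0 \<or> c \<noteq> 0" using z(1) zz by force
  then consider "a \<noteq> 0" | "b \<noteq> 0" | "c \<noteq> 0" by blast
  then show ?thesis
  proof cases
    case 1
    then have "m = l1" using coeffs(1) by simp
    with coeffs d have "z = a *\<^sub>R v1" by (simp add: zz)
    with \<open>m = l1\<close> show ?thesis by blast
  next
    case 2
    then have "m = l2" using coeffs(2) by simp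
    with coeffs d have "z = b *\<^sub>R v2" by (simp add: zz)
    with \<open>m = l2\<close> show ?thesis by blast
  next
    case 3
    then have "m = l3" using coeffs(3) by simp
    with coeffs d have "z = c *\<^sub>R v3" by (simp add: zz)
    with \<open>m = l3\<close> show ?thesis by blast
  qed
qed

lemma eigenvector_row:
  fixes g :: "real^3^3"
  assumes "g *v v = l *\<^sub>R v"
  shows "g$i$1 * v$1 + g$i$2 * v$2 + g$i$3 * v$3 = v$i * l"
proof -
  have "(g *v v)$i = g$i$1 * v$1 + g$i$2 * v$2 + g$i$3 * v$3"
    by (simp add: matrix_vector_mult_def sum_3)
  then show ?thesis using assms by (simp add: mult.commute)
qed

lemma det_eq_prod_eigenvalues:
  fixes g :: "real^3^3"
  assumes e: "g *v v1 = l1 *\<^sub>R v1" "g *v v2 = l2 *\<^sub>R v2" "g *v v3 = l3 *\<^sub>R v3"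
    and D: "det3 v1 v2 v3 \<noteq> 0"
  shows "det g = l1 * l2 * l3"
proof -
  let ?V = "transpose (vector [v1, v2, v3] :: real^3^3)"
  let ?L = "vector [vector [l1, 0, 0], vector [0, l2, 0], vector [0, 0, l3]] :: real^3^3"
  have "g ** ?V = ?V ** ?L"
    unfolding vec_eq_iff matrix_matrix_mult_def transpose_def
    by (simp add: sum_3 forall_3 eigenvector_row[OF e(1)] eigenvector_row[OF e(2)]
        eigenvector_row[OF e(3)])
  then have "det (g ** ?V) = det (?V ** ?L)" by (rule arg_cong)
  then have "det g * det ?V = det ?V * det ?L" by (simp only: det_mul)
  moreover have "det ?V = det3 v1 v2 v3" by (simp add: det3_def)
  moreover have "det ?L = l1 * l2 * l3" by (simp add: det_3)
  ultimately show ?thesis using D by simp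
qed

section \<open>The Minkowski form and the circle \<open>S1\<close>\<close>

lemma mink_sym: "mink u v = mink v u"
  by (simp add: mink_def algebra_simps)

lemma mink_scaleR_left [simp]: "mink (a *\<^sub>R u) v = a * mink u v"
  and mink_scaleR_right [simp]: "mink u (a *\<^sub>R v) = a * mink u v"
  and mink_add_left [simp]: "mink (u + w) v = mink u v + mink w v"
  and mink_add_right [simp]: "mink u (v + w) = mink u v + mink u w"
  by (simp_all add: mink_def algebra_simps)

lemma SO0_21_mink: "g \<in> SO0_21 \<Longrightarrow> mink (g *v u) (g *v v) = mink u v"
  by (simp add: SO0_21_def)

lemma mink_eigenvectors_orthogonal:
  assumes "g \<in> SO0_21" "g *v u = a *\<^sub>R u" "g *v v = b *\<^sub>R v" "a * b \<noteq> 1"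
  shows "mink u v = 0"
proof -
  have "mink u v = a * b * mink u v"
    using SO0_21_mink[OF assms(1), of u v] assms(2,3) by (simp add: mult.commute)
  then show ?thesis using assms(4) by (simp add: mult.commute)
qed

lemma mink_nondegenerate:
  assumes "det3 v1 v2 v3 \<noteq> 0" "mink v1 v1 = 0" "mink v1 v2 = 0" "mink v1 v3 = 0"
  shows "v1 = 0"
proof -
  \<comment> \<open>\<open>w\<close> is the Minkowski dual of \<open>v1\<close>: \<open>mink v1 w\<close> is the squared Euclidean norm of \<open>v1\<close>\<close>
  define w :: "real^3" where "w = vector [v1$1, v1$2, - v1$3]"
  obtain \<alpha> \<beta> \<gamma> where "w = \<alpha> *\<^sub>R v1 + \<beta> *\<^sub>R v2 + \<gamma> *\<^sub>R v3"
    using assms(1) by (rule det3_nonzero_spans)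
  then have "mink v1 w = 0" using assms(2-4) by simp
  then have "v1$1^2 + v1$2^2 + v1$3^2 = 0" by (simp add: w_def mink_def power2_eq_square)
  then show "v1 = 0" by (simp add: vec3_eq_iff add_nonneg_eq_0_iff)
qed

lemma cauchy_schwarz_2: "((a::real)*x + b*y)^2 \<le> (a^2 + b^2) * (x^2 + y^2)"
proof -
  have "(a^2 + b^2) * (x^2 + y^2) - (a*x + b*y)^2 = (a*y - b*x)^2"
    by (simp add: power2_eq_square algebra_simps)
  then show ?thesis by (metis diff_ge_0_iff_ge zero_le_power2)
qed

lemma S1_nonzero: "z \<in> S1 \<Longrightarrow> z \<noteq> 0"
  by (auto simp: S1_def)

lemma S1_isotropic: "z \<in> S1 \<Longrightarrow> mink z z = 0"
  by (auto simp: S1_def mink_def power2_eq_square)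

lemma S1_scaleR_eq: "z \<in> S1 \<Longrightarrow> p \<in> S1 \<Longrightarrow> z = c *\<^sub>R p \<Longrightarrow> z = p"
  by (auto simp: S1_def)

lemma S1_mink_neq_0:
  assumes "p \<in> S1" "q \<in> S1" "p \<noteq> q"
  shows "mink p q \<noteq> 0"
proof
  assume "mink p q = 0"
  moreover have "p$1^2 + p$2^2 = 1" "q$1^2 + q$2^2 = 1" "p$3 = 1" "q$3 = 1"
    using assms by (auto simp: S1_def)
  ultimately have "(p$1 - q$1)^2 + (p$2 - q$2)^2 = 0"
    by (simp add: mink_def power2_eq_square algebra_simps)
  then have "p = q" using \<open>p$3 = 1\<close> \<open>q$3 = 1\<close> by (simp add: vec3_eq_iff)
  then show False using assms(3) by simp
qed

lemma S1_orthogonal_not_timelike: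
  assumes "p \<in> S1" "mink u p = 0"
  shows "mink u u \<ge> 0"
proof -
  have p: "p$1^2 + p$2^2 = 1" "p$3 = 1" using assms(1) by (auto simp: S1_def)
  then have "u$1*p$1 + u$2*p$2 = u$3" using assms(2) by (simp add: mink_def)
  then have "(u$3)^2 \<le> u$1^2 + u$2^2" using cauchy_schwarz_2[of "u$1" "p$1" "u$2" "p$2"] p by simp
  then show ?thesis by (simp add: mink_def power2_eq_square)
qed

lemma isotropic_scaleR_S1:
  assumes "mink a a = 0" "a \<noteq> 0"
  shows "(1 / a$3) *\<^sub>R a \<in> S1"
proof -
  have aa: "a$1^2 + a$2^2 = a$3^2" using assms(1) by (simp add: mink_def power2_eq_square)
  have "a$3 \<noteq> 0"
  proof
    assume "a$3 = 0"
    with aa have "a = 0" by (simp add: vec3_eq_iff)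
    with assms(2) show False by simp
  qed
  with aa have "(a$1/a$3)^2 + (a$2/a$3)^2 = 1"
    by (simp add: power_divide add_divide_distrib[symmetric])
  with \<open>a$3 \<noteq> 0\<close> show ?thesis by (simp add: S1_def)
qed

lemma S1_eigenvalue_pos:
  assumes g: "g \<in> SO0_21" and z: "z \<in> S1" "g *v z = c *\<^sub>R z"
  shows "c > 0"
proof -
  \<comment> \<open>\<open>w\<close> is a future timelike vector, and \<open>mink z w < 0\<close> for the future null vector \<open>z\<close>\<close>
  define e3 :: "real^3" where "e3 = vector [0, 0, 1]"
  define w where "w = g *v e3"
  have w3: "w$3 > 0" using g by (simp add: w_def e3_def SO0_21_def matrix_vector_mult_def sum_3)
  have "mink w w = mink e3 e3" unfolding w_def by (rule SO0_21_mink[OF g])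
  then have ww: "w$1^2 + w$2^2 < w$3^2" by (simp add: mink_def e3_def power2_eq_square)
  have "mink (g *v z) w = mink z e3" unfolding w_def by (rule SO0_21_mink[OF g])
  then have c: "c * mink z w = -1" using z by (simp add: mink_def e3_def S1_def algebra_simps)
  have zz: "z$1^2 + z$2^2 = 1" "z$3 = 1" using z by (auto simp: S1_def)
  have "(z$1*w$1 + z$2*w$2)^2 < (w$3)^2"
    using cauchy_schwarz_2[of "z$1" "w$1" "z$2" "w$2"] zz ww by simp
  then have "z$1*w$1 + z$2*w$2 < w$3" using w3 by (simp add: power2_less_imp_less)
  then have "mink z w < 0" using zz by (simp add: mink_def)
  with c show ?thesis by (smt (verit) mult_nonpos_nonpos)
qed

section \<open>The eigenframe of a hyperbolic element\<close>

lemma eigenvalue_reciprocal_partner: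
  fixes g :: "real^3^3"
  assumes g: "g \<in> SO0_21"
    and e: "g *v v1 = l1 *\<^sub>R v1" "g *v v2 = l2 *\<^sub>R v2" "g *v v3 = l3 *\<^sub>R v3"
    and D: "det3 v1 v2 v3 \<noteq> 0" and "v1 \<noteq> 0"
  shows "l1*l1 = 1 \<or> l1*l2 = 1 \<or> l1*l3 = 1"
proof (rule ccontr)
  assume "\<not> ?thesis"
  then have "mink v1 v1 = 0" "mink v1 v2 = 0" "mink v1 v3 = 0"
    using mink_eigenvectors_orthogonal[OF g] e by blast+
  then have "v1 = 0" using mink_nondegenerate[OF D] by blast
  with \<open>v1 \<noteq> 0\<close> show False by simp
qed

lemma reciprocal_pairing_cases:
  fixes l1 l2 l3 :: real
  assumes d: "l1 \<noteq> l2" "l1 \<noteq> l3" "l2 \<noteq> l3" and prod: "l1 * l2 * l3 = 1"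
    and p1: "l1*l1 = 1 \<or> l1*l2 = 1 \<or> l1*l3 = 1"
    and p2: "l2*l1 = 1 \<or> l2*l2 = 1 \<or> l2*l3 = 1"
    and p3: "l3*l1 = 1 \<or> l3*l2 = 1 \<or> l3*l3 = 1"
  shows "(l1 = 1 \<and> l2*l3 = 1) \<or> (l2 = 1 \<and> l1*l3 = 1) \<or> (l3 = 1 \<and> l1*l2 = 1)"
proof -
  consider "l1*l2 = 1" | "l1*l3 = 1" | "l2*l3 = 1" | "l1*l1 = 1" "l2*l2 = 1" "l3*l3 = 1"
    using p1 p2 p3 by (auto simp: mult.commute)
  then show ?thesis
  proof cases
    case 1
    then show ?thesis using prod by simp
  next
    case 2
    then have "l2 = 1" using prod by (metis mult.commute mult.left_commute mult_1_right)
    with 2 show ?thesis by simp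
  next
    case 3
    then have "l1 = 1" using prod by (metis mult.assoc mult_1_right)
    with 3 show ?thesis by simp
  next
    case 4
    then show ?thesis using d by (auto simp: square_eq_1_iff)
  qed
qed

lemma S1_eigenvector_of_isotropic:
  fixes g :: "real^3^3"
  assumes g: "g \<in> SO0_21" and "g *v a = l *\<^sub>R a" "a \<noteq> 0" "l * l \<noteq> 1"
  obtains p where "p \<in> S1" "g *v p = l *\<^sub>R p" "l > 0"
proof
  let ?p = "(1 / a$3) *\<^sub>R a"
  have "mink a a = 0" using mink_eigenvectors_orthogonal[OF g assms(2,2,4)] .
  then show p: "?p \<in> S1" using assms(3) by (rule isotropic_scaleR_S1)
  show gp: "g *v ?p = l *\<^sub>R ?p"
    using assms(2) by (simp add: matrix_vector_mult_scaleR scaleR_left_commute)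
  show "l > 0" using S1_eigenvalue_pos[OF g p gp] .
qed

locale hyperbolic_frame =
  fixes g :: "real^3^3" and lam :: real and p q u :: "real^3"
  assumes SO: "g \<in> SO0_21" and lam: "0 < lam" "lam < 1"
    and p: "p \<in> S1" "g *v p = lam *\<^sub>R p"
    and q: "q \<in> S1" "g *v q = (1/lam) *\<^sub>R q"
    and u: "u \<noteq> 0" "g *v u = u"

lemma hyperbolic_frame_of_eigenvalues:
  fixes g :: "real^3^3"
  assumes g: "g \<in> SO0_21" and u: "g *v u = u" "u \<noteq> 0"
    and a: "g *v a = la *\<^sub>R a" "a \<noteq> 0" and b: "g *v b = lb *\<^sub>R b" "b \<noteq> 0"
    and l: "la * lb = 1" "la \<noteq> lb"
  shows "\<exists>lam p q u. hyperbolic_frame g lam p q u"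
proof -
  have la: "la \<noteq> 0" and lb: "lb \<noteq> 0" using l(1) by auto
  have "la * la \<noteq> 1" using l la by (metis mult_left_cancel)
  then obtain p where p: "p \<in> S1" "g *v p = la *\<^sub>R p" "la > 0"
    using S1_eigenvector_of_isotropic[OF g a] by blast
  have "lb * lb \<noteq> 1" using l lb by (metis mult.commute mult_left_cancel)
  then obtain q where q: "q \<in> S1" "g *v q = lb *\<^sub>R q" "lb > 0"
    using S1_eigenvector_of_isotropic[OF g b] by blast
  have inv: "lb = 1/la" "la = 1/lb" using l(1) la lb by (simp_all add: field_simps)
  show ?thesis
  proof (cases "la < 1")
    case True
    then show ?thesis using g p q u inv(1) unfolding hyperbolic_frame_def by blast
  next
    case False
    moreover have "la \<noteq> 1" using l(2) inv(1) by auto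
    ultimately have "la > 1" by simp
    then have "lb < 1" using inv(1) by simp
    then show ?thesis using g q p u inv(2) unfolding hyperbolic_frame_def by blast
  qed
qed

lemma hyperbolic_eigenframe:
  fixes g :: "real^3^3"
  assumes "hyperbolic g"
  shows "\<exists>lam p q u. hyperbolic_frame g lam p q u"
proof -
  have g: "g \<in> SO0_21" using assms by (simp add: hyperbolic_def)
  obtain l1 l2 l3 where d: "l1 \<noteq> l2" "l1 \<noteq> l3" "l2 \<noteq> l3"
    and ev: "is_eigenvalue g l1" "is_eigenvalue g l2" "is_eigenvalue g l3"
    using assms unfolding hyperbolic_def by blast
  obtain v1 v2 v3 where v: "v1 \<noteq> 0" "v2 \<noteq> 0" "v3 \<noteq> 0"
    and e: "g *v v1 = l1 *\<^sub>R v1" "g *v v2 = l2 *\<^sub>R v2" "g *v v3 = l3 *\<^sub>R v3"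
    using ev unfolding is_eigenvalue_def by blast
  have D: "det3 v1 v2 v3 \<noteq> 0" "det3 v2 v1 v3 \<noteq> 0" "det3 v3 v1 v2 \<noteq> 0"
    using det3_eigenvectors_nonzero[OF e d v] det3_eigenvectors_nonzero[OF e(2,1,3)]
      det3_eigenvectors_nonzero[OF e(3,1,2)] d v by auto
  have "l1 * l2 * l3 = 1" using det_eq_prod_eigenvalues[OF e D(1)] g by (simp add: SO0_21_def)
  then have "(l1 = 1 \<and> l2*l3 = 1) \<or> (l2 = 1 \<and> l1*l3 = 1) \<or> (l3 = 1 \<and> l1*l2 = 1)"
    using reciprocal_pairing_cases[OF d] d
      eigenvalue_reciprocal_partner[OF g e D(1) v(1)]
      eigenvalue_reciprocal_partner[OF g e(2,1,3) D(2) v(2)]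
      eigenvalue_reciprocal_partner[OF g e(3,1,2) D(3) v(3)] by blast
  then show ?thesis
  proof (elim disjE conjE)
    assume "l1 = 1" "l2*l3 = 1"
    then show ?thesis using hyperbolic_frame_of_eigenvalues[OF g _ v(1) e(2) v(2) e(3) v(3)] e(1) d by simp
  next
    assume "l2 = 1" "l1*l3 = 1"
    then show ?thesis using hyperbolic_frame_of_eigenvalues[OF g _ v(2) e(1) v(1) e(3) v(3)] e(2) d by simp
  next
    assume "l3 = 1" "l1*l2 = 1"
    then show ?thesis using hyperbolic_frame_of_eigenvalues[OF g _ v(3) e(1) v(1) e(2) v(2)] e(3) d by simp
  qed
qed

context hyperbolic_frame
begin

lemma inv_lam_gt_1: "1/lam > 1"
  using lam by simp

lemma eigenvalues_distinct: "1 \<noteq> lam" "1 \<noteq> 1/lam" "lam \<noteq> 1/lam"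
  using lam inv_lam_gt_1 mult_strict_mono[of lam 1 lam 1] by (auto simp: field_simps)

lemma u_eigen: "g *v u = 1 *\<^sub>R u"
  using u by simp

lemma det3_upq: "det3 u p q \<noteq> 0"
  using det3_eigenvectors_nonzero[OF u_eigen p(2) q(2) eigenvalues_distinct u(1)]
    S1_nonzero p q by blast

lemma det3_pqu: "det3 p q u \<noteq> 0"
  using det3_upq det3_rotate[of p q u] by simp

lemma eigenvector_trichotomy:
  assumes "z \<noteq> 0" "g *v z = m *\<^sub>R z"
  shows "(m = 1 \<and> (\<exists>c. z = c *\<^sub>R u)) \<or> (m = lam \<and> (\<exists>c. z = c *\<^sub>R p))
    \<or> (m = 1/lam \<and> (\<exists>c. z = c *\<^sub>R q))"
  using eigenvector_cases[OF u_eigen p(2) q(2) eigenvalues_distinct u(1) _ _ assms]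
    S1_nonzero p q by blast

lemma mink_u_p: "mink u p = 0"
  using mink_eigenvectors_orthogonal[OF SO u_eigen p(2)] eigenvalues_distinct by simp

lemma mink_u_q: "mink u q = 0"
  using mink_eigenvectors_orthogonal[OF SO u_eigen q(2)] eigenvalues_distinct by simp

lemma mink_p_q: "mink p q \<noteq> 0"
proof -
  have "p \<noteq> q"
  proof
    assume "p = q"
    then have "lam *\<^sub>R p = (1/lam) *\<^sub>R p" using p(2) q(2) by metis
    then show False using eigenvalues_distinct(3) S1_nonzero[OF p(1)] by (metis scaleR_cancel_right)
  qed
  then show ?thesis using S1_mink_neq_0 p(1) q(1) by blast
qed

lemma mink_u_u: "mink u u > 0"
proof -
  have "mink u u \<noteq> 0"
    using mink_nondegenerate[OF det3_upq _ mink_u_p mink_u_q] u(1) by blast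
  moreover have "mink u u \<ge> 0" using S1_orthogonal_not_timelike[OF p(1) mink_u_p] .
  ultimately show ?thesis by simp
qed

text \<open>The unit fixed vector, with the sign that makes \<open>(p, q, x0)\<close> positively oriented.\<close>
definition x0_scale :: real where
  "x0_scale = sgn (det3 p q u) / sqrt (mink u u)"

definition x0 :: "real^3" where
  "x0 = x0_scale *\<^sub>R u"

lemma x0_scale_sq: "x0_scale * x0_scale * mink u u = 1"
proof -
  have "sgn (det3 p q u) * sgn (det3 p q u) = 1" using det3_pqu by (auto simp: sgn_if)
  then show ?thesis using mink_u_u by (simp add: x0_scale_def)
qed

lemma x0_scale_orientation: "x0_scale * det3 p q u > 0"
  using det3_pqu mink_u_u by (simp add: x0_scale_def sgn_if divide_neg_pos)

lemma x0_fixed: "g *v x0 = x0"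
  using u(2) by (simp add: x0_def matrix_vector_mult_scaleR)

lemma mink_x0_x0: "mink x0 x0 = 1"
  using x0_scale_sq by (simp add: x0_def mult.assoc)

lemma mink_p_x0: "mink p x0 = 0" and mink_q_x0: "mink q x0 = 0" and mink_x0_q: "mink x0 q = 0"
  using mink_u_p mink_u_q by (simp_all add: x0_def mink_sym[of _ u])

lemma det3_p_q_x0: "det3 p q x0 > 0"
  using x0_scale_orientation by (simp add: x0_def det3_scaleR3)

lemma xminus_eq: "xminus g = p"
  unfolding xminus_def
proof (rule the_equality)
  show "p \<in> S1 \<and> (\<exists>l<1. g *v p = l *\<^sub>R p)" using p lam by blast
next
  fix z assume z: "z \<in> S1 \<and> (\<exists>l<1. g *v z = l *\<^sub>R z)"
  then obtain l where l: "l < 1" "g *v z = l *\<^sub>R z" by blast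
  then obtain c where "z = c *\<^sub>R p"
    using eigenvector_trichotomy[OF S1_nonzero l(2)] z inv_lam_gt_1 by auto
  then show "z = p" using S1_scaleR_eq z p(1) by blast
qed

lemma xplus_eq: "xplus g = q"
  unfolding xplus_def
proof (rule the_equality)
  show "q \<in> S1 \<and> (\<exists>l>1. g *v q = l *\<^sub>R q)" using q inv_lam_gt_1 by blast
next
  fix z assume z: "z \<in> S1 \<and> (\<exists>l>1. g *v z = l *\<^sub>R z)"
  then obtain l where l: "l > 1" "g *v z = l *\<^sub>R z" by blast
  then obtain c where "z = c *\<^sub>R q"
    using eigenvector_trichotomy[OF S1_nonzero l(2)] z lam by auto
  then show "z = q" using S1_scaleR_eq z q(1) by blast
qed

lemma xzero_eq: "xzero g = x0"
  unfolding xzero_def xminus_eq xplus_eq pos_oriented_iff_det3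
proof (rule the_equality)
  show "g *v x0 = x0 \<and> mink x0 x0 = 1 \<and> det3 p q x0 > 0"
    using x0_fixed mink_x0_x0 det3_p_q_x0 by blast
next
  fix x assume x: "g *v x = x \<and> mink x x = 1 \<and> det3 p q x > 0"
  then have "x \<noteq> 0" by (auto simp: mink_def)
  then obtain c where c: "x = c *\<^sub>R u"
    using eigenvector_trichotomy[of x 1] x eigenvalues_distinct by auto
  have "c * c * mink u u = x0_scale * x0_scale * mink u u"
    using x c x0_scale_sq by (simp add: mult.assoc)
  then have "c = x0_scale \<or> c = - x0_scale" using mink_u_u by (simp add: square_eq_iff)
  moreover have "c * det3 p q u > 0" using x c by (simp add: det3_scaleR3)
  ultimately have "c = x0_scale" using x0_scale_orientation by (smt (verit) mult_minus_left)
  then show "x = x0" by (simp add: c x0_def)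
qed

lemma S1_orthogonal_x0:
  assumes z: "z \<in> S1" "mink z x0 = 0"
  shows "z = p \<or> z = q"
proof -
  obtain \<alpha> \<beta> \<gamma> where zz: "z = \<alpha> *\<^sub>R u + \<beta> *\<^sub>R p + \<gamma> *\<^sub>R q"
    using det3_upq by (rule det3_nonzero_spans)
  have "x0_scale \<noteq> 0" using x0_scale_orientation by fastforce
  moreover have "mink z x0 = x0_scale * mink u z" by (simp add: x0_def mink_sym[of z u])
  ultimately have "mink u z = 0" using z(2) by simp
  moreover have "mink u z = \<alpha> * mink u u" using mink_u_p mink_u_q by (simp add: zz)
  ultimately have "\<alpha> = 0" using mink_u_u by simp
  then have zz': "z = \<beta> *\<^sub>R p + \<gamma> *\<^sub>R q" using zz by simp
  have "mink z z = 2 * \<beta> * \<gamma> * mink p q"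
    using S1_isotropic[OF p(1)] S1_isotropic[OF q(1)]
    by (simp add: zz' mink_sym[of q p] algebra_simps)
  then have "\<beta> = 0 \<or> \<gamma> = 0" using S1_isotropic[OF z(1)] mink_p_q by simp
  moreover have "\<beta> + \<gamma> = 1" using z(1) p(1) q(1) zz' by (simp add: S1_def)
  ultimately show ?thesis using zz' by auto
qed

lemma vminus_x0: "vminus x0 = p"
  unfolding vminus_def pos_oriented_iff_det3
proof (rule the_equality)
  show "p \<in> S1 \<and> mink p x0 = 0 \<and> (\<exists>y. y \<in> S1 \<and> mink y x0 = 0 \<and> det3 p y x0 > 0)"
    using p(1) q(1) mink_p_x0 mink_q_x0 det3_p_q_x0 by blast
next
  fix x assume "x \<in> S1 \<and> mink x x0 = 0 \<and> (\<exists>y. y \<in> S1 \<and> mink y x0 = 0 \<and> det3 x y x0 > 0)"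
  then obtain y where x: "x = p \<or> x = q" and y: "y = p \<or> y = q" and D: "det3 x y x0 > 0"
    using S1_orthogonal_x0 by blast
  show "x = p"
  proof (rule ccontr)
    assume "x \<noteq> p"
    with x have "x = q" by blast
    with y D have "y = p" using det3_repeat12[of q x0] by auto
    with \<open>x = q\<close> D show False using det3_p_q_x0 det3_swap12[of q p x0] by simp
  qed
qed

lemma vplus_x0: "vplus x0 = q"
  unfolding vplus_def vminus_x0 pos_oriented_iff_det3
proof (rule the_equality)
  show "q \<in> S1 \<and> mink q x0 = 0 \<and> det3 p q x0 > 0"
    using q(1) mink_q_x0 det3_p_q_x0 by blast
next
  fix y assume y: "y \<in> S1 \<and> mink y x0 = 0 \<and> det3 p y x0 > 0"
  then have "y \<noteq> p" using det3_repeat12[of p x0] by auto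
  with y show "y = q" using S1_orthogonal_x0 by blast
qed

lemma Ewu_eq: "Ewu g = span {x0, q}"
  by (simp add: Ewu_def xzero_eq xplus_eq)

lemma contract_unstable_plane: "g *v (a *\<^sub>R x0 + (lam * b) *\<^sub>R q) = a *\<^sub>R x0 + b *\<^sub>R q"
  using x0_fixed q(2) lam by (simp add: matrix_vector_right_distrib matrix_vector_mult_scaleR)

end

section \<open>Euclidean estimates on the unstable plane\<close>

lemma span_pair_obtain:
  assumes "y \<in> span {u, v}"
  obtains a b where "y = a *\<^sub>R u + b *\<^sub>R v"
  using assms by (auto simp: span_insert span_singleton) (metis add.commute diff_add_cancel)

lemma norm_sq_vec3: "(norm (x::real^3))^2 = x$1^2 + x$2^2 + x$3^2"
proof -
  have "(norm x)^2 = (\<Sum>i\<in>UNIV. x$i * x$i)"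
    unfolding power2_norm_eq_inner inner_vec_def inner_real_def ..
  then show ?thesis by (simp add: sum_3 power2_eq_square)
qed

lemma norm_sq_spacelike_S1_plane:
  assumes "mink x x = 1" "q \<in> S1" "mink x q = 0"
  shows "(norm (a *\<^sub>R x + b *\<^sub>R q))^2 = a^2 + 2 * (a * x$3 + b)^2"
proof -
  have c: "x$1^2 + x$2^2 = 1 + x$3^2" "q$1^2 + q$2^2 = 1" "q$3 = 1" "x$1*q$1 + x$2*q$2 = x$3"
    using assms by (auto simp: mink_def S1_def power2_eq_square algebra_simps)
  have "(norm (a *\<^sub>R x + b *\<^sub>R q))^2 = a^2 * (x$1^2 + x$2^2 + x$3^2)
      + 2*a*b * (x$1*q$1 + x$2*q$2 + x$3*q$3) + b^2 * (q$1^2 + q$2^2 + q$3^2)"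
    unfolding norm_sq_vec3 by (simp add: power2_eq_square algebra_simps)
  also have "\<dots> = a^2 * (1 + 2 * x$3^2) + 2*a*b * (2 * x$3) + b^2 * 2" using c by simp
  also have "\<dots> = a^2 + 2 * (a * x$3 + b)^2" by (simp add: power2_eq_square algebra_simps)
  finally show ?thesis .
qed

lemma S1_chord_bound:
  assumes x: "mink x x = 1" and "p \<in> S1" "q \<in> S1" "mink p x = 0" "mink q x = 0"
  shows "(dist p q)^2 * (1 + (x$3)^2) \<le> 4"
proof -
  have X: "x$1^2 + x$2^2 = 1 + x$3^2" using x by (simp add: mink_def power2_eq_square)
  have pq: "p$1^2 + p$2^2 = 1" "q$1^2 + q$2^2 = 1" "p$3 = 1" "q$3 = 1"
    "x$1*p$1 + x$2*p$2 = x$3" "x$1*q$1 + x$2*q$2 = x$3"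
    using assms by (auto simp: mink_def S1_def algebra_simps)
  \<comment> \<open>Lagrange's identity in the plane: the cross products of \<open>(x$1, x$2)\<close> with \<open>p\<close> and \<open>q\<close>
    have square \<open>(1 + x$3^2) - x$3^2 = 1\<close>, and the inner product with \<open>q - p\<close> vanishes\<close>
  have lagrange: "(a1^2 + a2^2) * (b1^2 + b2^2) = (a1*b1 + a2*b2)^2 + (a1*b2 - a2*b1)^2"
    for a1 a2 b1 b2 :: real by (simp add: power2_eq_square algebra_simps)
  define Cp where "Cp = x$1*p$2 - x$2*p$1"
  define Cq where "Cq = x$1*q$2 - x$2*q$1"
  have "Cp^2 = 1" "Cq^2 = 1"
    using lagrange[of "x$1" "x$2" "p$1" "p$2"] lagrange[of "x$1" "x$2" "q$1" "q$2"] X pq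
    by (simp_all add: Cp_def Cq_def)
  moreover have "(Cq - Cp)^2 + (Cq + Cp)^2 = 2 * Cq^2 + 2 * Cp^2"
    by (simp add: power2_eq_square algebra_simps)
  ultimately have "(Cq - Cp)^2 \<le> 4" by (smt (verit) zero_le_power2)
  have "x$1*(q$1 - p$1) + x$2*(q$2 - p$2) = 0" using pq by (simp add: algebra_simps)
  moreover have "x$1*(q$2 - p$2) - x$2*(q$1 - p$1) = Cq - Cp" by (simp add: Cp_def Cq_def algebra_simps)
  ultimately have "(1 + x$3^2) * ((q$1 - p$1)^2 + (q$2 - p$2)^2) = (Cq - Cp)^2"
    using lagrange[of "x$1" "x$2" "q$1 - p$1" "q$2 - p$2"] X by simp
  moreover have "(dist p q)^2 = (q$1 - p$1)^2 + (q$2 - p$2)^2"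
    using pq by (simp add: dist_norm norm_sq_vec3 power2_commute)
  ultimately show ?thesis using \<open>(Cq - Cp)^2 \<le> 4\<close> by (simp add: mult.commute)
qed

lemma unstable_plane_estimate:
  fixes x q :: "real^3"
  assumes plane: "mink x x = 1" "q \<in> S1" "mink x q = 0"
    and \<epsilon>: "0 < \<epsilon>" "\<epsilon>^2 * (1 + (x$3)^2) \<le> 4"
    and lam: "0 \<le> lam" "lam \<le> 1"
    and y: "norm (a *\<^sub>R x + b *\<^sub>R q) < \<delta> * \<epsilon> / 4"
  shows "norm (a *\<^sub>R x + (lam * b) *\<^sub>R q) < \<delta>"
proof -
  define y where "y = a *\<^sub>R x + b *\<^sub>R q"
  have "\<epsilon>^2 \<le> \<epsilon>^2 * (1 + (x$3)^2)" by (simp add: mult_le_cancel_left1)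
  then have "\<epsilon>^2 \<le> 2^2" using \<epsilon>(2) by simp
  then have "\<epsilon> \<le> 2" by (rule power2_le_imp_le) simp
  have "0 < \<delta> * \<epsilon>" using y norm_ge_zero[of y] unfolding y_def by linarith
  then have "0 < \<delta>" using \<epsilon>(1) by (simp add: zero_less_mult_iff)
  then have "\<delta> * \<epsilon> \<le> \<delta> * 2" using \<open>\<epsilon> \<le> 2\<close> by simp
  then have ny: "norm y < \<delta>" using y \<open>0 < \<delta>\<close> unfolding y_def by linarith
  \<comment> \<open>the \<open>x\<close>-component of \<open>y\<close> is controlled by \<open>norm y\<close>, up to the factor \<open>norm x \<le> 2 sqrt 2 / \<epsilon>\<close>\<close>
  have "(norm (a *\<^sub>R x))^2 * \<epsilon>^2 = a^2 * ((1 + 2 * x$3^2) * \<epsilon>^2)"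
    using norm_sq_spacelike_S1_plane[OF plane, of a 0] by (simp add: power2_eq_square algebra_simps)
  also have "\<dots> \<le> (norm y)^2 * 8"
  proof (rule mult_mono)
    show "a^2 \<le> (norm y)^2"
      using norm_sq_spacelike_S1_plane[OF plane, of a b] unfolding y_def by simp
    have "(1 + 2 * x$3^2) * \<epsilon>^2 = 2 * (\<epsilon>^2 * (1 + x$3^2)) - \<epsilon>^2" by (simp add: algebra_simps)
    then show "(1 + 2 * x$3^2) * \<epsilon>^2 \<le> 8" using \<epsilon>(2) zero_le_power2[of \<epsilon>] by linarith
  qed auto
  also have "\<dots> < (\<delta> * \<epsilon> / 4)^2 * 8"
    using y unfolding y_def by (intro mult_strict_right_mono power_strict_mono) auto
  also have "\<dots> \<le> \<delta>^2 * \<epsilon>^2"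
    by (simp add: power_mult_distrib power_divide)
  finally have "(norm (a *\<^sub>R x))^2 < \<delta>^2" using \<epsilon>(1) by simp
  then have nx: "norm (a *\<^sub>R x) < \<delta>" using \<open>0 < \<delta>\<close> by (simp add: power2_less_imp_less)
  have "a *\<^sub>R x + (lam * b) *\<^sub>R q = lam *\<^sub>R y + (1 - lam) *\<^sub>R (a *\<^sub>R x)"
    by (simp add: y_def algebra_simps)
  also have "norm \<dots> \<le> norm (lam *\<^sub>R y) + norm ((1 - lam) *\<^sub>R (a *\<^sub>R x))"
    by (rule norm_triangle_ineq)
  also have "\<dots> = lam * norm y + (1 - lam) * norm (a *\<^sub>R x)"
    using lam by (simp only: norm_scaleR abs_of_nonneg diff_ge_0_iff_ge)
  also have "\<dots> < \<delta>"
    using ny nx lam by (intro convex_bound_lt) auto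
  finally show ?thesis .
qed

theorem mainTheorem3:
  fixes \<epsilon> \<delta> :: real and g :: "real^3^3"
  assumes "\<epsilon> > 0" and "g \<in> SO0_21" and "eps_hyperbolic \<epsilon> g" and "\<delta> > 0"
  shows "ball 0 (\<delta> * \<epsilon> / 4) \<inter> Ewu g \<subseteq> (\<lambda>x. g *v x) ` ball 0 \<delta>"
proof
  have "hyperbolic g" and spacelike: "eps_spacelike \<epsilon> (xzero g)"
    using assms(3) by (auto simp: eps_hyperbolic_def)
  then obtain lam p q u where "hyperbolic_frame g lam p q u"
    using hyperbolic_eigenframe by blast
  then interpret hyperbolic_frame g lam p q u .
  have "\<epsilon> \<le> dist p q"
    using spacelike by (simp add: eps_spacelike_def xzero_eq vminus_x0 vplus_x0 dist_commute)
  then have chord: "\<epsilon>^2 * (1 + (x0$3)^2) \<le> 4"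
    using S1_chord_bound[OF mink_x0_x0 p(1) q(1) mink_p_x0 mink_q_x0] assms(1)
    by (smt (verit) power_mono mult_right_mono zero_le_power2)
  fix y assume y: "y \<in> ball 0 (\<delta> * \<epsilon> / 4) \<inter> Ewu g"
  then have "y \<in> span {x0, q}" using Ewu_eq by simp
  then obtain a b where ab: "y = a *\<^sub>R x0 + b *\<^sub>R q" by (rule span_pair_obtain)
  have "norm (a *\<^sub>R x0 + (lam * b) *\<^sub>R q) < \<delta>"
    using unstable_plane_estimate[OF mink_x0_x0 q(1) mink_x0_q assms(1) chord] lam y ab by simp
  then show "y \<in> (\<lambda>x. g *v x) ` ball 0 \<delta>"
    using contract_unstable_plane[of a b] ab by force
qed

end
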